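(* Let $(X,f)$ be a dynamical system. Then $(X,f)$ is multi-minimal if and only if $(X,f^r)$ is multi-minimal for every $r\in\mathbb{N}$.
   Context: A dynamical system is a pair $(X,f)$ with $X$ a compact metric space and $f:X\to X$ continuous. A system is minimal if it has no proper non-empty closed invariant subset. $(X,f)$ is multi-minimal if for every $n\in\mathbb{N}$ the system $(X^n,f\times f^2\times\dots\times f^n)$ is minimal. *)

theory Defs
  imports "HOL-Analysis.Analysis"
begin

definition dyn_system :: "'a::metric_space set \<Rightarrow> ('a \<Rightarrow> 'a) \<Rightarrow> bool" where
  "dyn_system X f \<longleftrightarrow> compact X \<and> continuous_on X f \<and> f ` X \<subseteq> X"

definition minimal_on :: "'b topology \<Rightarrow> ('b \<Rightarrow> 'b) \<Rightarrow> bool" where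
  "minimal_on T g \<longleftrightarrow>
     (\<forall>A. closedin T A \<and> A \<noteq> {} \<and> g ` A \<subseteq> A \<longrightarrow> A = topspace T)"

definition prod_space :: "'a::metric_space set \<Rightarrow> nat \<Rightarrow> (nat \<Rightarrow> 'a) topology" where
  "prod_space X n = product_topology (\<lambda>i. top_of_set X) {1..n}"

definition prod_map :: "('a \<Rightarrow> 'a) \<Rightarrow> nat \<Rightarrow> (nat \<Rightarrow> 'a) \<Rightarrow> (nat \<Rightarrow> 'a)" where
  "prod_map f n = (\<lambda>x. \<lambda>i\<in>{1..n}. (f ^^ i) (x i))"

definition multi_minimal :: "'a::metric_space set \<Rightarrow> ('a \<Rightarrow> 'a) \<Rightarrow> bool" where
  "multi_minimal X f \<longleftrightarrow> (\<forall>n\<ge>1. minimal_on (prod_space X n) (prod_map f n))"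

end

theory Submission
  imports Defs
begin

text \<open>For \<open>r \<ge> 1\<close>, the projection of \<open>X^(nr)\<close> onto the coordinates \<open>r, 2r, \<dots>, nr\<close> is a
continuous surjection intertwining \<open>f \<times> f^2 \<times> \<dots> \<times> f^(nr)\<close> with
\<open>f^r \<times> (f^r)^2 \<times> \<dots> \<times> (f^r)^n\<close>. So the product system of \<open>f^r\<close> on \<open>X^n\<close> is a factor of
that of \<open>f\<close> on \<open>X^(nr)\<close>, and a factor of a minimal system is minimal: the preimage of a
closed invariant set is closed and invariant. The converse is the case \<open>r = 1\<close>.\<close>

lemma minimal_on_factor:
  assumes minimal: "minimal_on S g"
    and cont: "continuous_map S T p"
    and onto: "p ` topspace S = topspace T"
    and g_maps: "g ` topspace S \<subseteq> topspace S"
    and intertwine: "\<And>x. x \<in> topspace S \<Longrightarrow> p (g x) = h (p x)"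
  shows "minimal_on T h"
  unfolding minimal_on_def
proof (intro allI impI)
  fix A assume A: "closedin T A \<and> A \<noteq> {} \<and> h ` A \<subseteq> A"
  define B where "B = {x \<in> topspace S. p x \<in> A}"
  have "closedin S B"
    unfolding B_def using closedin_continuous_map_preimage[OF cont] A by blast
  moreover have "B \<noteq> {}"
  proof -
    obtain a where "a \<in> A"
      using A by blast
    moreover have "A \<subseteq> p ` topspace S"
      using A closedin_subset onto by blast
    ultimately show ?thesis
      unfolding B_def by blast
  qed
  moreover have "g ` B \<subseteq> B"
    using g_maps intertwine A by (auto simp: B_def)
  ultimately have "B = topspace S"
    using minimal unfolding minimal_on_def by blast
  then have "p ` topspace S \<subseteq> A"
    unfolding B_def by blast
  then have "topspace T \<subseteq> A"
    using onto by simp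
  with A closedin_subset show "A = topspace T" by blast
qed

lemma topspace_prod_space: "topspace (prod_space X n) = PiE {1..n} (\<lambda>_. X)"
  by (simp add: prod_space_def)

lemma funpow_image_subset: "f ` X \<subseteq> X \<Longrightarrow> (f ^^ i) ` X \<subseteq> X"
  by (induction i) auto

lemma prod_map_topspace:
  assumes "f ` X \<subseteq> X"
  shows "prod_map f n ` topspace (prod_space X n) \<subseteq> topspace (prod_space X n)"
  using funpow_image_subset[OF assms]
  by (fastforce simp: topspace_prod_space prod_map_def PiE_iff)

definition sample_coords :: "nat \<Rightarrow> nat \<Rightarrow> (nat \<Rightarrow> 'a) \<Rightarrow> (nat \<Rightarrow> 'a)" where
  "sample_coords r n x = (\<lambda>i\<in>{1..n}. x (i * r))"

lemma continuous_map_sample_coords: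
  assumes "r \<ge> 1"
  shows "continuous_map (prod_space X (n * r)) (prod_space X n) (sample_coords r n)"
  unfolding prod_space_def continuous_map_componentwise
proof (intro conjI ballI)
  fix i assume i: "i \<in> {1..n}"
  then have "i * r \<in> {1..n * r}"
    using assms by auto
  from continuous_map_product_projection[OF this, of "\<lambda>_. top_of_set X"] i
  show "continuous_map (product_topology (\<lambda>_. top_of_set X) {1..n * r}) (top_of_set X)
          (\<lambda>x. sample_coords r n x i)"
    by (simp add: sample_coords_def)
qed (auto simp: sample_coords_def)

lemma div_round_up_mult:
  fixes i r :: nat
  assumes "r \<ge> 1"
  shows "(i * r + r - 1) div r = i"
proof -
  have "i * r + r - 1 = (r - 1) + i * r"
    using assms by simp
  also have "\<dots> div r = i + (r - 1) div r"
    using assms by (intro div_mult_self1) simp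
  finally show ?thesis
    using assms by simp
qed

lemma div_round_up_range:
  fixes j n r :: nat
  assumes "r \<ge> 1" and "j \<in> {1..n * r}"
  shows "(j + r - 1) div r \<in> {1..n}"
proof -
  have "j + r - 1 < (n + 1) * r"
    using assms by auto
  then have "(j + r - 1) div r < n + 1"
    using assms by (simp add: div_less_iff_less_mult)
  moreover have "r div r \<le> (j + r - 1) div r"
    using assms by (intro div_le_mono) auto
  ultimately show ?thesis
    using assms by simp
qed

lemma sample_coords_image:
  assumes "r \<ge> 1"
  shows "sample_coords r n ` topspace (prod_space X (n * r)) = topspace (prod_space X n)"
proof
  show "sample_coords r n ` topspace (prod_space X (n * r)) \<subseteq> topspace (prod_space X n)"
    using assms by (fastforce simp: topspace_prod_space sample_coords_def PiE_iff)
next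
  show "topspace (prod_space X n) \<subseteq> sample_coords r n ` topspace (prod_space X (n * r))"
  proof
    fix y assume y: "y \<in> topspace (prod_space X n)"
    define x where "x = (\<lambda>j\<in>{1..n * r}. y ((j + r - 1) div r))"
    have "x \<in> topspace (prod_space X (n * r))"
      using y div_round_up_range[OF assms] by (auto simp: topspace_prod_space x_def PiE_iff)
    moreover have "sample_coords r n x = y"
      using y assms div_round_up_mult[OF assms]
      by (auto simp: sample_coords_def x_def topspace_prod_space PiE_iff extensional_def fun_eq_iff)
    ultimately show "y \<in> sample_coords r n ` topspace (prod_space X (n * r))"
      by blast
  qed
qed

lemma sample_coords_prod_map:
  assumes "r \<ge> 1"
  shows "sample_coords r n (prod_map f (n * r) x) = prod_map (f ^^ r) n (sample_coords r n x)"
proof -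
  have "(f ^^ r) ^^ i = f ^^ (i * r)" for i
    by (simp add: funpow_mult mult.commute)
  moreover have "i * r \<in> {1..n * r}" if "i \<in> {1..n}" for i
    using that assms by auto
  ultimately show ?thesis
    by (auto simp: sample_coords_def prod_map_def)
qed

theorem proposition6p2:
  fixes X :: "'a::metric_space set" and f :: "'a \<Rightarrow> 'a"
  assumes "dyn_system X f"
  shows "multi_minimal X f \<longleftrightarrow> (\<forall>r\<ge>1. multi_minimal X (f ^^ r))"
proof
  assume mm: "multi_minimal X f"
  have fX: "f ` X \<subseteq> X"
    using assms by (simp add: dyn_system_def)
  show "\<forall>r\<ge>1. multi_minimal X (f ^^ r)"
    unfolding multi_minimal_def
  proof (intro allI impI)
    fix r n :: nat assume r: "r \<ge> 1" and n: "n \<ge> 1"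
    have "minimal_on (prod_space X (n * r)) (prod_map f (n * r))"
      using mm n r by (simp add: multi_minimal_def)
    then show "minimal_on (prod_space X n) (prod_map (f ^^ r) n)"
      by (rule minimal_on_factor[where p = "sample_coords r n",
            OF _ continuous_map_sample_coords[OF r] sample_coords_image[OF r]
            prod_map_topspace[OF fX]])
        (rule sample_coords_prod_map[OF r])
  qed
next
  assume "\<forall>r\<ge>1. multi_minimal X (f ^^ r)"
  from this[rule_format, of 1] show "multi_minimal X f"
    by simp
qed

end
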